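(* For every principal $n$, every privilege $p\in\mathcal{A}(n)$, and every expression $e$ with $D\vdash e:t$, we have for all principals $n'$, all $P\subseteq\mathsf{Privileges}$ and all $h\in[\![D]\!]$: $[\![\mathtt{signs}\ n\ (\mathtt{check}\ p\ \mathtt{for}\ e)]\!]\,n'\,P\,h=[\![\mathtt{check}\ p\ \mathtt{for}\ (\mathtt{signs}\ n\ e)]\!]\,n'\,P\,h$.
   Context: Fix sets $\mathsf{Principals}$ and $\mathsf{Privileges}$ and an access control list $\mathcal{A}:\mathsf{Principals}\to\mathcal{P}(\mathsf{Privileges})$. Language. Types: $t::=\mathtt{bool}\mid t_1\to t_2$. Expressions: $e::=\mathtt{true}\mid x\mid \mathtt{if}\ e\ \mathtt{then}\ e_1\ \mathtt{else}\ e_2\mid \lambda x.e\mid e_1\,e_2\mid \mathtt{letrec}\ f(x)=e_1\ \mathtt{in}\ e_2\mid \mathtt{signs}\ n\ e\mid \mathtt{dopriv}\ p\ \mathtt{in}\ e\mid \mathtt{check}\ p\ \mathtt{for}\ e\mid \mathtt{test}\ p\ \mathtt{then}\ e_1\ \mathtt{else}\ e_2$ ($n$ a principal, $p$ a privilege). Typing $D\vdash e:t$ is simply typed: $\mathtt{letrec}$ typed by $D,f:t_1\to t_2,x:t_1\vdash e_1:t_2$ and $D,f:t_1\to t_2\vdash e_2:t$; $\mathtt{signs},\mathtt{dopriv},\mathtt{check}$ preserve the body type; $\mathtt{test}$, $\mathtt{if}$ need branches of a common type ($\mathtt{if}$ a $\mathtt{bool}$ guard). Eager semantics. $\bot,\star$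 are two distinct values, neither booleans nor functions. For a cpo $C$, $C_{\bot\star}=C\cup\{\bot,\star\}$ with $u\le v$ iff $u=\bot$ or $u=v$ or $u,v\in C$, $u\le v$. $[\![\mathtt{bool}]\!]=\{\mathsf{true},\mathsf{false}\}$ and $\mathcal{P}(\mathsf{Privileges})$ ordered by equality; $[\![t_1\to t_2]\!]=\mathcal{P}(\mathsf{Privileges})\to[\![t_1]\!]\to[\![t_2]\!]_{\bot\star}$ (continuous, pointwise order). $[\![D]\!]$: records $h$ with $h.x\in[\![D(x)]\!]$. $[\![D\vdash e:t]\!]\in\mathsf{Principals}\to\mathcal{P}(\mathsf{Privileges})\to[\![D]\!]\to[\![t]\!]_{\bot\star}$, written $[\![e]\!]nPh$. "let $d=E_1$ in $E_2$" yields $E_1$ if $E_1\in\{\bot,\star\}$, else $E_2$ with $d:=E_1$. $P\sqcup_n\{p\}$ is $P\cup\{p\}$ if $p\in\mathcal{A}(n)$, else $P$. Equations: $[\![\mathtt{true}]\!]nPh=\mathsf{true}$; $[\![x]\!]nPh=h.x$; $[\![\mathtt{if}\ e\ \mathtt{then}\ e_1\ \mathtt{else}\ e_2]\!]nPh=$ let $b=[\![e]\!]nPh$ in (if $b$ then $[\![e_1]\!]nPh$ else $[\![e_2]\!]nPh$); $[\![\lambda x.e]\!]nPh=\lambda P'.\lambda d.[\![e]\!]nP'(h[x\mapsto d])$; $[\![e_1e_2]\!]nPh=$ let $f=[\![e_1]\!]nPh$ in let $d=[\![e_2]\!]nPh$ in $fPd$; $[\![\mathtt{letrec}\ f(x)=e_1\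 \mathtt{in}\ e_2]\!]nPh=[\![e_2]\!]nP(h[f\mapsto\mathit{fix}\,G])$ with $G(g)=\lambda P'.\lambda d.[\![e_1]\!]nP'(h[f\mapsto g,x\mapsto d])$ (least fixed point); $[\![\mathtt{signs}\ n'\ e]\!]nPh=[\![e]\!]n'(P\cap\mathcal{A}(n'))h$; $[\![\mathtt{dopriv}\ p\ \mathtt{in}\ e]\!]nPh=[\![e]\!]n(P\sqcup_n\{p\})h$; $[\![\mathtt{check}\ p\ \mathtt{for}\ e]\!]nPh=$ if $p\in P$ then $[\![e]\!]nPh$ else $\star$; $[\![\mathtt{test}\ p\ \mathtt{then}\ e_1\ \mathtt{else}\ e_2]\!]nPh=$ if $p\in P$ then $[\![e_1]\!]nPh$ else $[\![e_2]\!]nPh$. *)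

theory Defs
  imports Main
begin

type_synonym vname = string

datatype ty = TBool | TFun ty ty

text \<open>Expressions; 'n = principals, 'p = privileges.\<close>
datatype ('n, 'p) expr =
    ETrue
  | EVar vname
  | EIf "('n, 'p) expr" "('n, 'p) expr" "('n, 'p) expr"
  | ELam vname "('n, 'p) expr"
  | EApp "('n, 'p) expr" "('n, 'p) expr"
  | ELetrec vname vname "('n, 'p) expr" "('n, 'p) expr"
  | ESigns 'n "('n, 'p) expr"
  | EDopriv 'p "('n, 'p) expr"
  | ECheck 'p "('n, 'p) expr"
  | ETest 'p "('n, 'p) expr" "('n, 'p) expr"

type_synonym tenv = "vname \<Rightarrow> ty option"

inductive typing :: "tenv \<Rightarrow> ('n, 'p) expr \<Rightarrow> ty \<Rightarrow> bool" where
  T_True: "typing D ETrue TBool"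
| T_Var: "D x = Some t \<Longrightarrow> typing D (EVar x) t"
| T_If: "typing D e TBool \<Longrightarrow> typing D e1 t \<Longrightarrow> typing D e2 t \<Longrightarrow> typing D (EIf e e1 e2) t"
| T_Lam: "typing (D(x \<mapsto> t1)) e t2 \<Longrightarrow> typing D (ELam x e) (TFun t1 t2)"
| T_App: "typing D e1 (TFun t1 t2) \<Longrightarrow> typing D e2 t1 \<Longrightarrow> typing D (EApp e1 e2) t2"
| T_Letrec: "typing (D(f \<mapsto> TFun t1 t2, x \<mapsto> t1)) e1 t2 \<Longrightarrow> typing (D(f \<mapsto> TFun t1 t2)) e2 t
     \<Longrightarrow> typing D (ELetrec f x e1 e2) t"
| T_Signs: "typing D e t \<Longrightarrow> typing D (ESigns n e) t"
| T_Dopriv: "typing D e t \<Longrightarrow> typing D (EDopriv p e) t"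
| T_Check: "typing D e t \<Longrightarrow> typing D (ECheck p e) t"
| T_Test: "typing D e1 t \<Longrightarrow> typing D e2 t \<Longrightarrow> typing D (ETest p e1 e2) t"

text \<open>Function values are represented by closures:
  VClo n x e h denotes  \<lambda>P'. \<lambda>d. [[e]] n P' (h[x := d]),
  VRec n f x e h denotes  fix G  for  G g = \<lambda>P'. \<lambda>d. [[e]] n P' (h[f := g, x := d]).\<close>
datatype ('n, 'p) val =
    VBool bool
  | VClo 'n vname "('n, 'p) expr" "vname \<Rightarrow> ('n, 'p) val option"
  | VRec 'n vname vname "('n, 'p) expr" "vname \<Rightarrow> ('n, 'p) val option"

type_synonym ('n, 'p) env = "vname \<Rightarrow> ('n, 'p) val option"

text \<open>Results: None is bottom (divergence), Some Star is the security-error value, Some (Val v) a value.\<close>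
datatype 'v res = Star | Val 'v

text \<open>Applying a closure f to an argument d: principal, body and environment to evaluate
  the body in (the privilege set P is supplied by the caller, as in  f P d).\<close>
fun call_target :: "('n, 'p) val \<Rightarrow> ('n, 'p) val \<Rightarrow> ('n \<times> ('n, 'p) expr \<times> ('n, 'p) env) option" where
  "call_target (VClo n x b h) d = Some (n, b, h(x \<mapsto> d))"
| "call_target (VRec n g x b h) d = Some (n, b, h(g \<mapsto> VRec n g x b h, x \<mapsto> d))"
| "call_target (VBool _) d = None"

declare [[unify_search_bound = 200, unify_trace_bound = 200]]

partial_function (option) sem ::
  "('n \<Rightarrow> 'p set) \<Rightarrow> ('n, 'p) expr \<Rightarrow> 'n \<Rightarrow> 'p set \<Rightarrow> ('n, 'p) env \<Rightarrow> ('n, 'p) val res option"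
where
  "sem A e n P h = (case e of
      ETrue \<Rightarrow> Some (Val (VBool True))
    | EVar x \<Rightarrow> (case h x of Some v \<Rightarrow> Some (Val v) | None \<Rightarrow> None)
    | EIf g e1 e2 \<Rightarrow> Option.bind (sem A g n P h) (\<lambda>r. case r of
          Star \<Rightarrow> Some Star
        | Val b \<Rightarrow> (if b = VBool True then sem A e1 n P h
                   else if b = VBool False then sem A e2 n P h else None))
    | ELam x b \<Rightarrow> Some (Val (VClo n x b h))
    | EApp e1 e2 \<Rightarrow> Option.bind (sem A e1 n P h) (\<lambda>r1. case r1 of
          Star \<Rightarrow> Some Star
        | Val f \<Rightarrow> Option.bind (sem A e2 n P h) (\<lambda>r2. case r2 of
              Star \<Rightarrow> Some Star
            | Val d \<Rightarrow> Option.bind (call_target f d) (\<lambda>(n', b, h'). sem A b n' P h')))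
    | ELetrec f x e1 e2 \<Rightarrow> sem A e2 n P (h(f \<mapsto> VRec n f x e1 h))
    | ESigns m b \<Rightarrow> sem A b m (P \<inter> A m) h
    | EDopriv p b \<Rightarrow> sem A b n (if p \<in> A n then insert p P else P) h
    | ECheck p b \<Rightarrow> (if p \<in> P then sem A b n P h else Some Star)
    | ETest p e1 e2 \<Rightarrow> (if p \<in> P then sem A e1 n P h else sem A e2 n P h))"

text \<open>Value typing and environments h \<in> [[D]] (h defined exactly on dom D).\<close>
inductive val_ty :: "('n, 'p) val \<Rightarrow> ty \<Rightarrow> bool" where
  V_Bool: "val_ty (VBool b) TBool"
| V_Clo: "(\<forall>y. (D y = None \<longrightarrow> h y = None) \<and>
               (\<forall>s. D y = Some s \<longrightarrow> (\<exists>v. h y = Some v \<and> val_ty v s)))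
          \<Longrightarrow> typing (D(x \<mapsto> t1)) e t2 \<Longrightarrow> val_ty (VClo n x e h) (TFun t1 t2)"
| V_Rec: "(\<forall>y. (D y = None \<longrightarrow> h y = None) \<and>
               (\<forall>s. D y = Some s \<longrightarrow> (\<exists>v. h y = Some v \<and> val_ty v s)))
          \<Longrightarrow> typing (D(f \<mapsto> TFun t1 t2, x \<mapsto> t1)) e t2 \<Longrightarrow> val_ty (VRec n f x e h) (TFun t1 t2)"

definition env_ok :: "tenv \<Rightarrow> ('n, 'p) env \<Rightarrow> bool" where
  "env_ok D h \<longleftrightarrow> (\<forall>y. case D y of None \<Rightarrow> h y = None
                       | Some s \<Rightarrow> (\<exists>v. h y = Some v \<and> val_ty v s))"

end

theory Submission
  imports Defs
begin

text \<open>Since p \<in> A n, the privilege p survives the restriction to A n performed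
  by signing, so checking it before or after signing gives the same answer.\<close>

lemma sem_ESigns: "sem A (ESigns m b) n P h = sem A b m (P \<inter> A m) h"
  by (subst sem.simps) simp

lemma sem_ECheck: "sem A (ECheck p b) n P h = (if p \<in> P then sem A b n P h else Some Star)"
  by (subst sem.simps) simp

lemma sem_ESigns_ECheck_commute:
  assumes "p \<in> A m"
  shows "sem A (ESigns m (ECheck p e)) n P h = sem A (ECheck p (ESigns m e)) n P h"
  using assms by (simp add: sem_ESigns sem_ECheck)

theorem theorem3:
  fixes A :: "'n \<Rightarrow> 'p set" and n :: 'n and p :: 'p and e :: "('n, 'p) expr"
  assumes "p \<in> A n" and "typing D e t"
  shows "\<forall>n' P h. env_ok D h \<longrightarrow>
           sem A (ESigns n (ECheck p e)) n' P h = sem A (ECheck p (ESigns n e)) n' P h"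
  using assms(1) by (simp add: sem_ESigns_ECheck_commute)

end
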